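(* The Pansiot pre-antipalindromes of length $3$ are exactly $001$, $011$, $100$, and $110$. Moreover, for every integer $n\geq 1$: (i) the Pansiot pre-antipalindromes of length $4n+1$ are precisely the words of the form $0u0$ or $1u1$, where $u$ is a Pansiot pre-antipalindrome of length $4n-1$; (ii) the Pansiot pre-antipalindromes of length $4n+3$ are precisely the words of the form $0u1$ or $1u0$, where $u$ is a Pansiot pre-antipalindrome of length $4n+1$.
   Context: Words are over the binary alphabet $\{0,1\}$, with letters also read as the integers $0$ and $1$. For a nonempty binary word $u=u_1u_2\cdots u_n$, its Pansiot coding is the binary word $c_1c_2\cdots c_{n-1}$ of length $n-1$ with $c_i=|u_i-u_{i+1}|$ (equivalently $c_i=u_i+u_{i+1}\bmod 2$). A binary word $x=x_1\cdots x_m$ is an anti-palindrome if $x_i\neq x_{m+1-i}$ for every $i\in\{1,\ldots,m\}$. A binary word is a Pansiot pre-antipalindrome if its Pansiot coding is an anti-palindrome. *)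

theory Defs
  imports Main
begin

definition binary_word :: "nat list \<Rightarrow> bool" where
  "binary_word u \<longleftrightarrow> set u \<subseteq> {0, 1}"

definition pansiot :: "nat list \<Rightarrow> nat list" where
  "pansiot u = map (\<lambda>i. if u ! i = u ! (Suc i) then 0 else 1) [0..<length u - 1]"

(* x_i \<noteq> x_{m+1-i} for all i (0-based: x!i \<noteq> x!(m-1-i)) *)
definition anti_palindrome :: "nat list \<Rightarrow> bool" where
  "anti_palindrome x \<longleftrightarrow> (\<forall>i < length x. x ! i \<noteq> x ! (length x - 1 - i))"

definition pansiot_pre_antipal :: "nat list \<Rightarrow> bool" where
  "pansiot_pre_antipal u \<longleftrightarrow> binary_word u \<and> u \<noteq> [] \<and> anti_palindrome (pansiot u)"

end

theory Submission
  imports Defs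
begin

text \<open>Stripping the outer letters of \<open>a v b\<close> strips the outer letters of its Pansiot coding, so
  \<open>a v b\<close> is a pre-antipalindrome iff \<open>v\<close> is one and \<open>(a = hd v) \<noteq> (last v = b)\<close>. By induction,
  a pre-antipalindrome of length \<open>2k+1\<close> has equal first and last letters iff \<open>k\<close> is even, so for
  such \<open>v\<close> the condition reads \<open>a = b \<longleftrightarrow> odd k\<close>. Lengths \<open>3\<close>, \<open>4n+1\<close> and \<open>4n+3\<close> are the cases
  \<open>k = 0\<close>, \<open>k = 2n-1\<close> and \<open>k = 2n\<close>.\<close>

lemma pansiot_Nil [simp]: "pansiot [] = []"
  by (simp add: pansiot_def)

lemma pansiot_singleton [simp]: "pansiot [a] = []"
  by (simp add: pansiot_def)

lemma pansiot_Cons_Cons [simp]: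
  "pansiot (a # b # w) = (if a = b then 0 else 1) # pansiot (b # w)"
proof -
  have "[0..<length (a # b # w) - 1] = 0 # map Suc [0..<length (b # w) - 1]"
    by (simp add: upt_conv_Cons map_Suc_upt del: upt_Suc)
  then show ?thesis
    by (simp add: pansiot_def)
qed

lemma pansiot_snoc:
  "v \<noteq> [] \<Longrightarrow> pansiot (v @ [b]) = pansiot v @ [if last v = b then 0 else 1]"
proof (induction v)
  case (Cons a v)
  then show ?case
    by (cases v) auto
qed simp

lemma pansiot_Cons_snoc:
  assumes "v \<noteq> []"
  shows "pansiot (a # v @ [b]) =
    (if a = hd v then 0 else 1) # pansiot v @ [if last v = b then 0 else 1]"
proof -
  have "pansiot (a # v) = (if a = hd v then 0 else 1) # pansiot v"
    using assms by (cases v) auto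
  then show ?thesis
    using pansiot_snoc[of "a # v" b] assms by simp
qed

lemma anti_palindrome_iff_list_all2: "anti_palindrome x \<longleftrightarrow> list_all2 (\<noteq>) x (rev x)"
  by (auto simp: anti_palindrome_def list_all2_conv_all_nth rev_nth)

lemma anti_palindrome_Cons_snoc:
  "anti_palindrome (x # w @ [y]) \<longleftrightarrow> x \<noteq> y \<and> anti_palindrome w"
  by (auto simp: anti_palindrome_iff_list_all2 list_all2_append)

lemma binary_word_Cons_snoc:
  "binary_word (a # v @ [b]) \<longleftrightarrow> a \<in> {0, 1} \<and> b \<in> {0, 1} \<and> binary_word v"
  by (auto simp: binary_word_def)

lemma pansiot_pre_antipal_Cons_snoc:
  assumes "v \<noteq> []"
  shows "pansiot_pre_antipal (a # v @ [b]) \<longleftrightarrow>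
    a \<in> {0, 1} \<and> b \<in> {0, 1} \<and> pansiot_pre_antipal v \<and> (a = hd v) \<noteq> (last v = b)"
  using assms
  by (auto simp: pansiot_pre_antipal_def binary_word_Cons_snoc pansiot_Cons_snoc
      anti_palindrome_Cons_snoc)

lemma pansiot_pre_antipal_singleton_iff: "pansiot_pre_antipal [a] \<longleftrightarrow> a \<in> {0, 1}"
  by (simp add: pansiot_pre_antipal_def binary_word_def anti_palindrome_def)

lemma binary_letters_xor_iff:
  fixes a b c d :: nat
  assumes "a \<in> {0, 1}" "b \<in> {0, 1}" "c \<in> {0, 1}" "d \<in> {0, 1}"
  shows "(a = c) \<noteq> (d = b) \<longleftrightarrow> (a = b \<longleftrightarrow> c \<noteq> d)"
  using assms by (elim insertE emptyE) simp_all

lemma binary_letter_eq_if_iff: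
  fixes a b :: nat
  assumes "a \<in> {0, 1}"
  shows "b \<in> {0, 1} \<and> (a = b \<longleftrightarrow> P) \<longleftrightarrow> b = (if P then a else 1 - a)"
  using assms by (elim insertE emptyE) auto

lemma pansiot_pre_antipal_hd_last_binary:
  "pansiot_pre_antipal v \<Longrightarrow> hd v \<in> {0, 1} \<and> last v \<in> {0, 1}"
  unfolding pansiot_pre_antipal_def binary_word_def using hd_in_set last_in_set by blast

lemma split_Cons_snoc:
  assumes "length u = Suc (Suc m)"
  obtains a v b where "u = a # v @ [b]" and "length v = m"
proof -
  obtain a u' where u: "u = a # u'"
    using assms by (cases u) auto
  then have "u' \<noteq> []"
    using assms by auto
  then obtain v b where "u' = v @ [b]"
    by (metis append_butlast_last_id)
  with u assms that show ?thesis
    by auto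
qed

lemma pansiot_pre_antipal_hd_eq_last_iff:
  "pansiot_pre_antipal v \<Longrightarrow> length v = 2 * k + 1 \<Longrightarrow> hd v = last v \<longleftrightarrow> even k"
proof (induction k arbitrary: v)
  case 0
  then obtain a where "v = [a]"
    by (cases v) auto
  then show ?case
    by simp
next
  case (Suc k)
  then have "length v = Suc (Suc (2 * k + 1))"
    by simp
  then obtain a w b where v: "v = a # w @ [b]" and w: "length w = 2 * k + 1"
    by (rule split_Cons_snoc)
  then have "w \<noteq> []"
    by auto
  then have ab: "a \<in> {0, 1}" "b \<in> {0, 1}" and pw: "pansiot_pre_antipal w"
    and wrap: "(a = hd w) \<noteq> (last w = b)"
    using Suc.prems(1) unfolding v pansiot_pre_antipal_Cons_snoc[OF \<open>w \<noteq> []\<close>] by simp_all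
  have "a = b \<longleftrightarrow> hd w \<noteq> last w"
    using wrap binary_letters_xor_iff ab pansiot_pre_antipal_hd_last_binary[OF pw] by blast
  also have "\<dots> \<longleftrightarrow> odd k"
    using Suc.IH[OF pw w] by simp
  finally show ?case
    unfolding v by simp
qed

lemma pansiot_pre_antipal_Cons_snoc_odd_length:
  assumes "length v = 2 * k + 1"
  shows "pansiot_pre_antipal (a # v @ [b]) \<longleftrightarrow>
    a \<in> {0, 1} \<and> b \<in> {0, 1} \<and> pansiot_pre_antipal v \<and> (a = b \<longleftrightarrow> odd k)"
proof -
  have "v \<noteq> []"
    using assms by auto
  have end_letters: "(a = hd v) \<noteq> (last v = b) \<longleftrightarrow> (a = b \<longleftrightarrow> odd k)"
    if "a \<in> {0, 1}" "b \<in> {0, 1}" "pansiot_pre_antipal v"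
  proof -
    have "(a = hd v) \<noteq> (last v = b) \<longleftrightarrow> (a = b \<longleftrightarrow> hd v \<noteq> last v)"
      using pansiot_pre_antipal_hd_last_binary[OF that(3)]
      by (intro binary_letters_xor_iff that(1,2)) simp_all
    then show ?thesis
      using pansiot_pre_antipal_hd_eq_last_iff[OF that(3) assms] by simp
  qed
  show ?thesis
    unfolding pansiot_pre_antipal_Cons_snoc[OF \<open>v \<noteq> []\<close>] using end_letters by (simp cong: conj_cong)
qed

lemma pansiot_pre_antipal_odd_length_eq:
  "{u. pansiot_pre_antipal u \<and> length u = 2 * k + 3} =
    {[a] @ v @ [if odd k then a else 1 - a] | a v.
      a \<in> {0, 1} \<and> pansiot_pre_antipal v \<and> length v = 2 * k + 1}"
  (is "?L = ?R")
proof (intro set_eqI iffI)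
  fix u
  assume "u \<in> ?L"
  then have u: "pansiot_pre_antipal u" "length u = Suc (Suc (2 * k + 1))"
    by auto
  from u(2) obtain a v b where uv: "u = a # v @ [b]" and v: "length v = 2 * k + 1"
    by (rule split_Cons_snoc)
  have "a \<in> {0, 1}" "pansiot_pre_antipal v" "b \<in> {0, 1} \<and> (a = b \<longleftrightarrow> odd k)"
    using u(1) unfolding uv pansiot_pre_antipal_Cons_snoc_odd_length[OF v] by simp_all
  then show "u \<in> ?R"
    unfolding uv binary_letter_eq_if_iff[OF \<open>a \<in> {0, 1}\<close>] using v by auto
next
  fix u
  assume "u \<in> ?R"
  then obtain a v where u: "u = a # v @ [if odd k then a else 1 - a]"
    and a: "a \<in> {0, 1}" and v: "pansiot_pre_antipal v" "length v = 2 * k + 1"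
    by auto
  have "(if odd k then a else 1 - a) \<in> {0, 1} \<and> (a = (if odd k then a else 1 - a) \<longleftrightarrow> odd k)"
    by (rule iffD2[OF binary_letter_eq_if_iff[OF a] refl])
  then have "pansiot_pre_antipal u"
    unfolding u pansiot_pre_antipal_Cons_snoc_odd_length[OF v(2)] using a v(1) by blast
  then show "u \<in> ?L"
    using u v(2) by simp
qed

theorem mainTheorem2:
  shows "{u. pansiot_pre_antipal u \<and> length u = 3} = {[0,0,1], [0,1,1], [1,0,0], [1,1,0]}
    \<and> (\<forall>n::nat. n \<ge> 1 \<longrightarrow>
          {u. pansiot_pre_antipal u \<and> length u = 4*n+1}
            = {[a] @ v @ [a] | a v. a \<in> {0,1} \<and> pansiot_pre_antipal v \<and> length v = 4*n-1}
        \<and> {u. pansiot_pre_antipal u \<and> length u = 4*n+3}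
            = {[a] @ v @ [1-a] | a v. a \<in> {0,1} \<and> pansiot_pre_antipal v \<and> length v = 4*n+1})"
proof (intro conjI allI impI)
  have "{[a] @ v @ [1 - a] | a v. a \<in> {0, 1} \<and> pansiot_pre_antipal v \<and> length v = 1}
      = {[0,0,1], [0,1,1], [1,0,0], [1,1,0]}"
    by (auto simp: length_Suc_conv pansiot_pre_antipal_singleton_iff)
  then show "{u. pansiot_pre_antipal u \<and> length u = 3} = {[0,0,1], [0,1,1], [1,0,0], [1,1,0]}"
    using pansiot_pre_antipal_odd_length_eq[of 0] by simp
  fix n :: nat
  assume "n \<ge> 1"
  then have "4 * n + 1 = 2 * (2 * n - 1) + 3" "4 * n - 1 = 2 * (2 * n - 1) + 1" "odd (2 * n - 1)"
    by auto
  then show "{u. pansiot_pre_antipal u \<and> length u = 4*n+1}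
      = {[a] @ v @ [a] | a v. a \<in> {0,1} \<and> pansiot_pre_antipal v \<and> length v = 4*n-1}"
    by (simp only: pansiot_pre_antipal_odd_length_eq) simp
  show "{u. pansiot_pre_antipal u \<and> length u = 4*n+3}
      = {[a] @ v @ [1-a] | a v. a \<in> {0,1} \<and> pansiot_pre_antipal v \<and> length v = 4*n+1}"
    using pansiot_pre_antipal_odd_length_eq[of "2 * n"] by simp
qed

end
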